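(* Let $a\in(0,1)$, $\tau=\frac{1+a}{1-a}$, and define $\mu\in(0,1/3)$ by $\tau^{-1}=1-3\mu$. For each integer $n\ge1$ let $J_n=[(1-2\mu)n,(1-\mu)n]$ and write $(T_a(z))^n=\sum_{m\ge0}a_{m,n}z^m$. Then there exists $\delta=\delta_a>0$ such that for every sufficiently large $n$ there is a set $E$ of integers with $E\subseteq J_n$, $|E|\ge\delta n$, and $|a_{m,n}|\ge\delta n^{-1/2}$ for every $m\in E$.
   Context: $T_a(z)=\frac{a+z}{1+\bar a z}$, an automorphism of the unit disk; $|E|$ denotes the cardinality of $E$. *)

theory Defs
  imports "HOL-Analysis.Analysis"
begin

definition Ta :: "complex \<Rightarrow> complex \<Rightarrow> complex" where
  "Ta a z = (a + z) / (1 + cnj a * z)"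

definition acoef :: "complex \<Rightarrow> nat \<Rightarrow> nat \<Rightarrow> complex" where
  "acoef a m n = (deriv ^^ m) (\<lambda>z. (Ta a z) ^ n) 0 / of_nat (fact m)"

end

theory Submission
  imports Defs "HOL-Complex_Analysis.Complex_Analysis"
begin

text \<open>
  On the unit circle \<open>|T\<^sub>a| = 1\<close>, so by Parseval's identity the weights \<open>p\<^sub>m = |a\<^sub>m\<^sub>,\<^sub>n|\<^sup>2\<close>
  sum to \<open>1\<close>. Applied to \<open>f = T\<^sub>a\<^sup>n\<close> and to \<open>z f'(z)\<close>, and using that
  \<open>z f'(z) / f(z) = n (1 - a\<^sup>2) / |1 + a z|\<^sup>2\<close> there, it shows that this distribution has mean \<open>n\<close>
  and second moment \<open>n\<^sup>2 (1 + a\<^sup>2) / (1 - a\<^sup>2)\<close>. A Chebyshev-type argument then puts mass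
  \<open>\<ge> c / n\<close> on a single index of a window around \<open>n\<close>.

  The differential equation \<open>(a + z) (1 + a z) f' = n (1 - a\<^sup>2) f\<close> turns into a three-term
  recurrence \<open>y\<^sub>k\<^sub>+\<^sub>2 = 2 c\<^sub>k\<^sub>+\<^sub>1 y\<^sub>k\<^sub>+\<^sub>1 - y\<^sub>k\<close> for \<open>y\<^sub>k = k a\<^sub>k\<^sub>,\<^sub>n\<close>, whose coefficients satisfy
  \<open>|c\<^sub>k| \<le> 1 - \<eta>\<close> in the window and change by \<open>O(1/n)\<close> per step. The energy
  \<open>|y\<^sub>k|\<^sup>2 + |y\<^sub>k\<^sub>+\<^sub>1|\<^sup>2 - 2 c\<^sub>k (y\<^sub>k \<bullet> y\<^sub>k\<^sub>+\<^sub>1)\<close>, which would be conserved for constant \<open>c\<close>, is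
  comparable to \<open>|y\<^sub>k|\<^sup>2 + |y\<^sub>k\<^sub>+\<^sub>1|\<^sup>2\<close> and changes by a bounded factor across the window. Hence it
  is \<open>\<ge> C n\<close> throughout, and of any two consecutive coefficients in \<open>J\<^sub>n\<close> one satisfies
  \<open>|a\<^sub>m\<^sub>,\<^sub>n|\<^sup>2 \<ge> c / n\<close>.
\<close>

section \<open>Parseval's identity for power series on the unit circle\<close>

lemma has_integral_cis_int:
  fixes j :: int
  shows "((\<lambda>t. cis (of_int j * t)) has_integral (if j = 0 then 2 * pi else 0)) {0..2*pi}"
proof (cases "j = 0")
  case True
  then show ?thesis
    using has_integral_const_real[of "1::complex" 0 "2*pi"] by (simp add: scaleR_conv_of_real)
next
  case False
  define A where "A = \<i> * (of_int j :: complex)"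
  have "A \<noteq> 0" using False by (simp add: A_def)
  have exp_A: "exp (t *\<^sub>R A) = cis (of_int j * t)" for t
    by (simp add: A_def cis_conv_exp scaleR_conv_of_real mult.commute mult.left_commute)
  define F where "F = (\<lambda>t. exp (t *\<^sub>R A) / A)"
  have "(F has_vector_derivative cis (of_int j * t)) (at t within {0..2*pi})" for t
  proof -
    have "(F has_vector_derivative exp (t *\<^sub>R A) * A / A) (at t within {0..2*pi})"
      unfolding F_def divide_inverse
      by (intro has_vector_derivative_mult_left exp_scaleR_has_vector_derivative_right)
    then show ?thesis using \<open>A \<noteq> 0\<close> exp_A by simp
  qed
  then have "((\<lambda>t. cis (of_int j * t)) has_integral F (2*pi) - F 0) {0..2*pi}"
    by (intro fundamental_theorem_of_calculus) auto
  moreover have "F (2*pi) = F 0"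
    using exp_A[of "2*pi"] cis_multiple_2pi[of "of_int j"] by (simp add: F_def mult.commute)
  ultimately show ?thesis using False by simp
qed

lemma sums_integral_suminf:
  fixes c :: "nat \<Rightarrow> complex" and \<phi> :: "nat \<Rightarrow> real \<Rightarrow> complex"
  assumes summable: "summable (\<lambda>k. norm (c k))"
    and cont: "\<And>k. continuous_on {a..b} (\<phi> k)"
    and bound: "\<And>k t. t \<in> {a..b} \<Longrightarrow> norm (\<phi> k t) \<le> B"
  shows "(\<lambda>k. c k * integral {a..b} (\<phi> k)) sums integral {a..b} (\<lambda>t. \<Sum>k. c k * \<phi> k t)"
proof -
  have "uniform_limit {a..b} (\<lambda>n t. \<Sum>k<n. c k * \<phi> k t) (\<lambda>t. \<Sum>k. c k * \<phi> k t) sequentially"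
  proof (rule Weierstrass_m_test)
    show "norm (c k * \<phi> k t) \<le> norm (c k) * B" if "t \<in> {a..b}" for k t
      using bound[OF that, of k] by (simp add: norm_mult mult_left_mono)
    show "summable (\<lambda>k. norm (c k) * B)" using summable by (rule summable_mult2)
  qed
  moreover have "continuous_on {a..b} (\<lambda>t. \<Sum>k<n. c k * \<phi> k t)" for n
    by (intro continuous_intros cont)
  ultimately obtain I J
    where I: "\<And>n. ((\<lambda>t. \<Sum>k<n. c k * \<phi> k t) has_integral I n) {a..b}"
      and J: "((\<lambda>t. \<Sum>k. c k * \<phi> k t) has_integral J) {a..b}" and "I \<longlonglongrightarrow> J"
    by (rule uniform_limit_integral) auto
  have "I = (\<lambda>n. \<Sum>k<n. c k * integral {a..b} (\<phi> k))"
  proof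
    fix n
    have "((\<lambda>t. \<Sum>k<n. c k * \<phi> k t) has_integral (\<Sum>k<n. c k * integral {a..b} (\<phi> k))) {a..b}"
      by (intro has_integral_sum has_integral_mult_right integrable_integral
          integrable_continuous_interval cont) auto
    then show "I n = (\<Sum>k<n. c k * integral {a..b} (\<phi> k))"
      using I[of n] by (metis has_integral_unique)
  qed
  then show ?thesis
    unfolding sums_def using \<open>I \<longlonglongrightarrow> J\<close> J by (simp add: integral_unique)
qed

lemma summable_norm_powser_coeffs:
  fixes p :: "nat \<Rightarrow> complex"
  assumes "1 < R" and "\<And>z. norm z < R \<Longrightarrow> (\<lambda>m. p m * z ^ m) sums P z"
  shows "summable (\<lambda>m. norm (p m))"
proof -
  define r where "r = (1 + R) / 2"
  have "1 < r" "r < R" using \<open>1 < R\<close> by (auto simp: r_def)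
  then have "summable (\<lambda>m. p m * complex_of_real r ^ m)"
    using assms(2) sums_summable by (metis abs_of_pos norm_of_real order.strict_trans zero_less_one)
  moreover have "norm (1::complex) < norm (complex_of_real r)" using \<open>1 < r\<close> by simp
  ultimately have "summable (\<lambda>m. norm (p m * 1 ^ m))" by (rule powser_insidea)
  then show ?thesis by simp
qed

lemma powser_unit_circle:
  fixes p :: "nat \<Rightarrow> complex"
  assumes R: "1 < R" and P: "\<And>z. norm z < R \<Longrightarrow> (\<lambda>m. p m * z ^ m) sums P z"
  shows powser_unit_circle_sums: "\<And>t. (\<lambda>m. p m * cis (real m * t)) sums P (cis t)"
    and continuous_on_powser_unit_circle: "continuous_on {0..2*pi} (\<lambda>t. P (cis t))"
    and norm_powser_unit_circle_le: "\<And>t. norm (P (cis t)) \<le> (\<Sum>m. norm (p m))"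
proof -
  have summable: "summable (\<lambda>m. norm (p m))" by (rule summable_norm_powser_coeffs[OF R P])
  show sums: "(\<lambda>m. p m * cis (real m * t)) sums P (cis t)" for t
    using P[of "cis t"] R by (simp add: Complex.DeMoivre)
  have "uniform_limit {0..2*pi} (\<lambda>n t. \<Sum>m<n. p m * cis (real m * t))
          (\<lambda>t. \<Sum>m. p m * cis (real m * t)) sequentially"
    by (rule Weierstrass_m_test[where M = "\<lambda>m. norm (p m)"]) (auto simp: norm_mult summable)
  then have "continuous_on {0..2*pi} (\<lambda>t. \<Sum>m. p m * cis (real m * t))"
    by (rule uniform_limit_theorem[rotated]) (auto intro!: continuous_intros always_eventually)
  then show "continuous_on {0..2*pi} (\<lambda>t. P (cis t))" using sums by (simp add: sums_iff)
  show "norm (P (cis t)) \<le> (\<Sum>m. norm (p m))" for t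
  proof -
    have "norm (\<Sum>m. p m * cis (real m * t)) \<le> (\<Sum>m. norm (p m * cis (real m * t)))"
      by (rule summable_norm) (use summable in \<open>simp add: norm_mult\<close>)
    then show ?thesis using sums[of t] by (simp add: sums_iff norm_mult)
  qed
qed

lemma integral_cis_mult_cnj_powser:
  fixes q :: "nat \<Rightarrow> complex"
  assumes R: "1 < R" and Q: "\<And>z. norm z < R \<Longrightarrow> (\<lambda>m. q m * z ^ m) sums Q z"
  shows "integral {0..2*pi} (\<lambda>t. cis (real m * t) * cnj (Q (cis t))) = 2 * pi * cnj (q m)"
proof -
  have orth: "integral {0..2*pi} (\<lambda>t. cis (real m * t) * cnj (cis (real k * t)))
      = (if k = m then 2 * pi else 0)" for k
  proof -
    have "(\<lambda>t. cis (real m * t) * cnj (cis (real k * t))) = (\<lambda>t. cis (of_int (int m - int k) * t))"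
      by (auto simp: cis_cnj cis_mult algebra_simps)
    then show ?thesis using has_integral_cis_int[of "int m - int k"] by (auto simp: integral_unique)
  qed
  have "(\<lambda>k. cnj (q k) * integral {0..2*pi} (\<lambda>t. cis (real m * t) * cnj (cis (real k * t))))
      sums integral {0..2*pi} (\<lambda>t. \<Sum>k. cnj (q k) * (cis (real m * t) * cnj (cis (real k * t))))"
    using summable_norm_powser_coeffs[OF R Q]
    by (intro sums_integral_suminf[where B = 1]) (auto intro!: continuous_intros simp: norm_mult)
  moreover have "(\<Sum>k. cnj (q k) * (cis (real m * t) * cnj (cis (real k * t))))
      = cis (real m * t) * cnj (Q (cis t))" for t
  proof -
    have "(\<lambda>k. cnj (q k * cis (real k * t))) sums cnj (Q (cis t))"
      by (rule sums_cnj[THEN iffD2]) (rule powser_unit_circle_sums[OF R Q])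
    then have "(\<lambda>k. cis (real m * t) * cnj (q k * cis (real k * t)))
        sums (cis (real m * t) * cnj (Q (cis t)))"
      by (rule sums_mult)
    then show ?thesis by (simp add: sums_iff mult_ac)
  qed
  ultimately have sums_integral: "(\<lambda>k. if k = m then cnj (q m) * (2 * pi) else 0)
      sums integral {0..2*pi} (\<lambda>t. cis (real m * t) * cnj (Q (cis t)))"
    by (simp add: orth if_distrib cong: if_cong)
  have "integral {0..2*pi} (\<lambda>t. cis (real m * t) * cnj (Q (cis t))) = cnj (q m) * (2 * pi)"
    using sums_unique2[OF sums_integral sums_single[of m]] by simp
  then show ?thesis by (simp add: ac_simps)
qed

theorem parseval_powser:
  fixes p q :: "nat \<Rightarrow> complex"
  assumes R: "1 < R"
    and P: "\<And>z. norm z < R \<Longrightarrow> (\<lambda>m. p m * z ^ m) sums P z"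
    and Q: "\<And>z. norm z < R \<Longrightarrow> (\<lambda>m. q m * z ^ m) sums Q z"
  shows "(\<lambda>m. p m * cnj (q m))
           sums (integral {0..2*pi} (\<lambda>t. P (cis t) * cnj (Q (cis t))) / (2 * pi))"
proof -
  have "(\<lambda>m. p m * integral {0..2*pi} (\<lambda>t. cis (real m * t) * cnj (Q (cis t))))
      sums integral {0..2*pi} (\<lambda>t. \<Sum>m. p m * (cis (real m * t) * cnj (Q (cis t))))"
  proof (rule sums_integral_suminf[where B = "\<Sum>m. norm (q m)"])
    show "summable (\<lambda>m. norm (p m))" by (rule summable_norm_powser_coeffs[OF R P])
    show "continuous_on {0..2*pi} (\<lambda>t. cis (real k * t) * cnj (Q (cis t)))" for k
      by (intro continuous_intros continuous_on_powser_unit_circle[OF R Q] continuous_on_cnj)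
    show "norm (cis (real k * t) * cnj (Q (cis t))) \<le> (\<Sum>m. norm (q m))" for k t
      using norm_powser_unit_circle_le[OF R Q, of t] by (simp add: norm_mult)
  qed
  moreover have "(\<Sum>m. p m * (cis (real m * t) * cnj (Q (cis t)))) = P (cis t) * cnj (Q (cis t))" for t
    using sums_mult2[OF powser_unit_circle_sums[OF R P, of t], of "cnj (Q (cis t))"]
    by (simp add: sums_iff mult_ac)
  ultimately have "(\<lambda>m. p m * (2 * pi * cnj (q m)))
      sums integral {0..2*pi} (\<lambda>t. P (cis t) * cnj (Q (cis t)))"
    by (simp only: integral_cis_mult_cnj_powser[OF R Q])
  from sums_divide[OF this, of "2 * pi"] show ?thesis by simp
qed

lemma has_integral_powser_unit_circle:
  fixes p :: "nat \<Rightarrow> complex"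
  assumes R: "1 < R" and P: "\<And>z. norm z < R \<Longrightarrow> (\<lambda>m. p m * z ^ m) sums P z"
  shows "((\<lambda>t. P (cis t)) has_integral 2 * pi * p 0) {0..2*pi}"
proof -
  have one: "(\<lambda>m. (if m = 0 then 1 else 0) * z ^ m) sums (1::complex)" for z
  proof -
    have "(\<lambda>m. (if m = 0 then 1 else 0) * z ^ m) = (\<lambda>m. if m = 0 then 1::complex else 0)"
      by auto
    then show ?thesis using sums_single[of 0 "\<lambda>_. 1::complex"] by simp
  qed
  have "(\<lambda>m. if m = 0 then p 0 else 0) sums (integral {0..2*pi} (\<lambda>t. P (cis t)) / (2 * pi))"
    using parseval_powser[OF R P one] by (simp add: if_distrib cong: if_cong)
  then have "integral {0..2*pi} (\<lambda>t. P (cis t)) = 2 * pi * p 0"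
    using sums_single[of 0 "\<lambda>_. p 0"] sums_unique2 by (fastforce simp: field_simps)
  then show ?thesis
    using integrable_continuous_interval[OF continuous_on_powser_unit_circle[OF R P]]
    by (metis integrable_integral)
qed

lemma has_integral_holomorphic_unit_circle:
  fixes f :: "complex \<Rightarrow> complex"
  assumes "f holomorphic_on ball 0 R" "1 < R"
  shows "((\<lambda>t. f (cis t)) has_integral 2 * pi * f 0) {0..2*pi}"
  using has_integral_powser_unit_circle[OF assms(2), of "\<lambda>m. (deriv ^^ m) f 0 / fact m" f]
    holomorphic_power_series[OF assms(1)] by simp

section \<open>The squared coefficients of \<open>T\<^sub>a\<^sup>n\<close> as a distribution\<close>

lemma Ta_of_real: "Ta (complex_of_real s) z = (of_real s + z) / (1 + of_real s * z)"
  by (simp add: Ta_def)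

lemma one_plus_of_real_mult_nonzero:
  assumes "0 < s" "norm z < 1 / s"
  shows "1 + complex_of_real s * z \<noteq> 0"
proof
  assume "1 + complex_of_real s * z = 0"
  then have "norm (complex_of_real s * z) = 1" by (simp add: add_eq_0_iff)
  moreover have "norm (complex_of_real s * z) < 1" using assms by (simp add: norm_mult field_simps)
  ultimately show False by simp
qed

lemma holomorphic_on_Ta_power:
  assumes "0 < s"
  shows "(\<lambda>z. Ta (complex_of_real s) z ^ n) holomorphic_on ball 0 (1 / s)"
  unfolding Ta_of_real using one_plus_of_real_mult_nonzero[OF assms]
  by (intro holomorphic_intros) auto

lemma acoef_sums:
  assumes "0 < s" "norm z < 1 / s"
  shows "(\<lambda>m. acoef (complex_of_real s) m n * z ^ m) sums (Ta (complex_of_real s) z ^ n)"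
  using holomorphic_power_series[OF holomorphic_on_Ta_power[OF assms(1)], of z] assms(2)
  by (simp add: acoef_def)

lemma deriv_Ta_power:
  assumes "0 < s" "norm z < 1 / s"
  shows "deriv (\<lambda>z. Ta (complex_of_real s) z ^ n) z
    = of_nat n * Ta (complex_of_real s) z ^ (n - 1) * ((1 - of_real s ^ 2) / (1 + of_real s * z) ^ 2)"
proof -
  have "1 + complex_of_real s * z \<noteq> 0" by (rule one_plus_of_real_mult_nonzero[OF assms])
  then have "((\<lambda>z. ((of_real s + z) / (1 + of_real s * z)) ^ n) has_field_derivative
      of_nat n * ((of_real s + z) / (1 + of_real s * z)) ^ (n - 1)
        * ((1 - of_real s ^ 2) / (1 + of_real s * z) ^ 2)) (at z)"
    by (auto intro!: derivative_eq_intros) (simp add: field_simps power2_eq_square)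
  then show ?thesis unfolding Ta_of_real by (rule DERIV_imp_deriv)
qed

lemma sums_mult_deriv_taylor:
  assumes "f holomorphic_on ball 0 R" "norm z < R"
  shows "(\<lambda>m. (of_nat m * ((deriv ^^ m) f 0 / fact m)) * z ^ m) sums (z * deriv f z)"
proof -
  define c where "c m = (deriv ^^ m) f 0 / fact m" for m
  have "deriv f holomorphic_on ball 0 R" by (rule holomorphic_deriv[OF assms(1)]) auto
  from holomorphic_power_series[OF this, of z] assms(2)
  have "(\<lambda>k. (deriv ^^ k) (deriv f) 0 / fact k * z ^ k) sums deriv f z" by simp
  moreover have "(deriv ^^ k) (deriv f) 0 / fact k = of_nat (Suc k) * c (Suc k)" for k
  proof -
    have "(deriv ^^ k) (deriv f) = (deriv ^^ Suc k) f" by (simp only: funpow_Suc_right o_def)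
    moreover have "(fact (Suc k) :: complex) = of_nat (Suc k) * fact k"
      by (simp only: fact_Suc of_nat_mult)
    ultimately show ?thesis unfolding c_def by (simp del: of_nat_Suc fact_Suc)
  qed
  ultimately have "(\<lambda>k. z * (of_nat (Suc k) * c (Suc k) * z ^ k)) sums (z * deriv f z)"
    by (intro sums_mult) simp
  then have "(\<lambda>k. (of_nat (Suc k) * c (Suc k)) * z ^ Suc k) sums (z * deriv f z)"
    by (simp add: mult_ac del: of_nat_Suc)
  then have "(\<lambda>m. (of_nat m * c m) * z ^ m) sums (z * deriv f z)"
    using sums_Suc_iff[where f = "\<lambda>m. (of_nat m * c m) * z ^ m"] by (simp del: of_nat_Suc)
  then show ?thesis unfolding c_def .
qed

lemma sums_of_nat_mult_acoef:
  assumes "0 < s" "norm z < 1 / s"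
  shows "(\<lambda>m. (of_nat m * acoef (complex_of_real s) m n) * z ^ m)
    sums (z * deriv (\<lambda>z. Ta (complex_of_real s) z ^ n) z)"
  using sums_mult_deriv_taylor[OF holomorphic_on_Ta_power[OF assms(1)] assms(2)]
  by (simp add: acoef_def)

lemma mobius_mult_reciprocal:
  fixes z w s :: complex
  assumes "z * w = 1" "1 + s * z \<noteq> 0" "1 + s * w \<noteq> 0"
  shows "(s + z) / (1 + s * z) * ((s + w) / (1 + s * w)) = 1"
proof -
  have "(s + z) * (s + w) - (1 + s * z) * (1 + s * w) = (z * w - 1) * (1 - s * s)"
    by (simp add: algebra_simps)
  then show ?thesis using assms by (simp add: divide_simps)
qed

lemma mobius_deriv_mult_reciprocal:
  fixes z w s :: complex
  assumes "z * w = 1" "1 + s * z \<noteq> 0" "1 + s * w \<noteq> 0"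
  shows "z * ((1 - s ^ 2) / (1 + s * z) ^ 2) * ((s + w) / (1 + s * w))
    = 1 / (1 + s * z) + 1 / (1 + s * w) - 1"
proof -
  have "z * (s + w) = 1 + s * z" using assms(1) by (simp add: algebra_simps)
  moreover have "(1 + s * w) + (1 + s * z) - (1 + s * z) * (1 + s * w) = 1 - s ^ 2"
    using assms(1) by (simp add: algebra_simps power2_eq_square)
  ultimately show ?thesis
    using assms(2,3) by (simp add: divide_simps power2_eq_square) (simp add: algebra_simps)
qed

lemma mult_cnj_and_Ta_denoms_unit_circle:
  assumes "0 < s" "s < 1" "norm z = 1"
  shows "z * cnj z = 1" "1 + complex_of_real s * z \<noteq> 0" "1 + complex_of_real s * cnj z \<noteq> 0"
  using assms complex_norm_square[of z] one_plus_of_real_mult_nonzero[of s z]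
    one_plus_of_real_mult_nonzero[of s "cnj z"] by auto

lemma Ta_power_mult_cnj_unit_circle:
  assumes "0 < s" "s < 1" "norm z = 1"
  shows "Ta (complex_of_real s) z ^ n * cnj (Ta (complex_of_real s) z ^ n) = 1"
proof -
  have "Ta (complex_of_real s) z * cnj (Ta (complex_of_real s) z) = 1"
    using mobius_mult_reciprocal[OF mult_cnj_and_Ta_denoms_unit_circle[OF assms]] by (simp add: Ta_of_real)
  then show ?thesis by (metis complex_cnj_power power_mult_distrib power_one)
qed

lemma z_deriv_Ta_power_mult_cnj_unit_circle:
  assumes "0 < s" "s < 1" "norm z = 1"
  defines "g \<equiv> 1 / (1 + complex_of_real s * z)"
  shows "z * deriv (\<lambda>z. Ta (complex_of_real s) z ^ n) z * cnj (Ta (complex_of_real s) z ^ n)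
    = of_nat n * (g + cnj g - 1)"
proof (cases n)
  case 0
  then show ?thesis by simp
next
  case (Suc k)
  let ?T = "Ta (complex_of_real s) z"
  have "norm z < 1 / s" using assms by (simp add: field_simps)
  have "cnj (?T ^ n) = cnj ?T ^ (n - 1) * cnj ?T"
    unfolding Suc complex_cnj_power by (simp add: mult.commute)
  then have "z * deriv (\<lambda>w. Ta (complex_of_real s) w ^ n) z * cnj (?T ^ n)
      = of_nat n * (?T ^ (n - 1) * cnj ?T ^ (n - 1))
        * (z * ((1 - of_real s ^ 2) / (1 + of_real s * z) ^ 2) * cnj ?T)"
    unfolding deriv_Ta_power[OF assms(1) \<open>norm z < 1 / s\<close>] by (simp only: ac_simps)
  also have "?T ^ (n - 1) * cnj ?T ^ (n - 1) = 1"
    using Ta_power_mult_cnj_unit_circle[OF assms(1-3), of "n - 1"] by simp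
  also have "of_nat n * 1 * (z * ((1 - of_real s ^ 2) / (1 + of_real s * z) ^ 2) * cnj ?T)
      = of_nat n * (g + cnj g - 1)"
    using mobius_deriv_mult_reciprocal[OF mult_cnj_and_Ta_denoms_unit_circle[OF assms(1-3)]]
    by (simp add: Ta_of_real g_def)
  finally show ?thesis .
qed

lemma has_integral_unit_circle_averages:
  assumes "0 < s" "s < 1"
  defines "g \<equiv> \<lambda>z. 1 / (1 + complex_of_real s * z)"
  shows "((\<lambda>t. g (cis t)) has_integral of_real (2 * pi)) {0..2*pi}"
    and "((\<lambda>t. g (cis t) ^ 2) has_integral of_real (2 * pi)) {0..2*pi}"
    and "((\<lambda>t. g (cis t) * cnj (g (cis t))) has_integral of_real (2 * pi / (1 - s ^ 2))) {0..2*pi}"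
proof -
  have R: "1 < 1 / s" using assms by simp
  have holo: "g holomorphic_on ball 0 (1 / s)"
    unfolding g_def using one_plus_of_real_mult_nonzero[OF assms(1)]
    by (intro holomorphic_intros) auto
  show "((\<lambda>t. g (cis t)) has_integral of_real (2 * pi)) {0..2*pi}"
    using has_integral_holomorphic_unit_circle[OF holo R] by (simp add: g_def)
  have "(\<lambda>z. g z ^ 2) holomorphic_on ball 0 (1 / s)" by (intro holomorphic_intros holo)
  from has_integral_holomorphic_unit_circle[OF this R]
  show "((\<lambda>t. g (cis t) ^ 2) has_integral of_real (2 * pi)) {0..2*pi}" by (simp add: g_def)
  have g_sums: "(\<lambda>m. (- complex_of_real s) ^ m * z ^ m) sums g z" if "norm z < 1 / s" for z
  proof -
    have "norm (- complex_of_real s * z) < 1" using that assms by (simp add: norm_mult field_simps)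
    from geometric_sums[OF this] show ?thesis by (simp add: g_def flip: power_mult_distrib)
  qed
  have "s ^ 2 < 1" using assms by (simp add: power_less_one_iff)
  then have "norm (complex_of_real (s ^ 2)) < 1" by (simp only: norm_of_real) simp
  then have "(\<lambda>m. complex_of_real (s ^ 2) ^ m) sums (1 / (1 - complex_of_real (s ^ 2)))"
    by (rule geometric_sums)
  moreover have "(- complex_of_real s) ^ m * cnj ((- complex_of_real s) ^ m) = complex_of_real (s ^ 2) ^ m"
    for m by (simp add: power_mult_distrib[symmetric] power2_eq_square)
  ultimately have "integral {0..2*pi} (\<lambda>t. g (cis t) * cnj (g (cis t))) / (2 * pi)
      = 1 / (1 - complex_of_real (s ^ 2))"
    using parseval_powser[OF R g_sums g_sums] sums_unique2 by simp
  moreover have "(\<lambda>t. g (cis t) * cnj (g (cis t))) integrable_on {0..2*pi}"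
    by (intro integrable_continuous_interval continuous_intros continuous_on_cnj
        continuous_on_powser_unit_circle[OF R g_sums])
  ultimately show "((\<lambda>t. g (cis t) * cnj (g (cis t))) has_integral of_real (2 * pi / (1 - s ^ 2)))
      {0..2*pi}"
    by (simp add: has_integral_integrable_integral field_simps)
qed

lemma has_integral_one_unit_circle: "((\<lambda>t. 1::complex) has_integral of_real (2 * pi)) {0..2*pi}"
  using has_integral_const_real[of "1::complex" 0 "2*pi"] by (simp add: scaleR_conv_of_real)

lemma sums_weighted_norm_square:
  fixes u :: "nat \<Rightarrow> complex" and w :: "nat \<Rightarrow> real"
  assumes "(\<lambda>m. of_real (w m) * u m * cnj (u m)) sums of_real x"
  shows "(\<lambda>m. w m * norm (u m) ^ 2) sums x"
proof -
  have "of_real (w m) * u m * cnj (u m) = of_real (w m * norm (u m) ^ 2)" for m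
    by (simp add: complex_norm_square[symmetric] mult.assoc)
  then show ?thesis using assms by (simp only: sums_of_real_iff)
qed

lemma has_integral_z_deriv_Ta_power_mult_cnj:
  assumes "0 < s" "s < 1"
  shows "((\<lambda>t. cis t * deriv (\<lambda>z. Ta (complex_of_real s) z ^ n) (cis t)
      * cnj (Ta (complex_of_real s) (cis t) ^ n)) has_integral of_real (2 * pi * real n)) {0..2*pi}"
proof -
  define g where "g = (\<lambda>z. 1 / (1 + complex_of_real s * z))"
  have "((\<lambda>t. of_nat n * (g (cis t) + cnj (g (cis t)) - 1))
      has_integral of_nat n * (of_real (2 * pi) + cnj (of_real (2 * pi)) - of_real (2 * pi))) {0..2*pi}"
    unfolding g_def
    by (intro has_integral_mult_right has_integral_diff has_integral_add
        has_integral_cnj[unfolded o_def, THEN iffD2] has_integral_unit_circle_averages(1)[OF assms]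
        has_integral_one_unit_circle)
  moreover have "cis t * deriv (\<lambda>z. Ta (complex_of_real s) z ^ n) (cis t)
      * cnj (Ta (complex_of_real s) (cis t) ^ n) = of_nat n * (g (cis t) + cnj (g (cis t)) - 1)" for t
    unfolding g_def by (rule z_deriv_Ta_power_mult_cnj_unit_circle[OF assms]) simp
  ultimately show ?thesis by (simp add: mult.commute)
qed

lemma has_integral_norm_z_deriv_Ta_power:
  fixes s :: real and n :: nat
  assumes "0 < s" "s < 1"
  defines "F \<equiv> \<lambda>z. z * deriv (\<lambda>z. Ta (complex_of_real s) z ^ n) z"
  shows "((\<lambda>t. F (cis t) * cnj (F (cis t)))
    has_integral of_real (2 * pi * (real n ^ 2 * (2 / (1 - s ^ 2) - 1)))) {0..2*pi}"
proof -
  define g where "g = (\<lambda>z. 1 / (1 + complex_of_real s * z))"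
  have pointwise: "F (cis t) * cnj (F (cis t))
      = of_nat n ^ 2 * (g (cis t) ^ 2 + cnj (g (cis t) ^ 2) + 1
        + 2 * (g (cis t) * cnj (g (cis t))) - 2 * g (cis t) - 2 * cnj (g (cis t)))" for t
  proof -
    let ?f = "Ta (complex_of_real s) (cis t) ^ n"
    have "?f * cnj ?f = 1" using Ta_power_mult_cnj_unit_circle[OF assms(1,2)] by simp
    then have "F (cis t) * cnj (F (cis t)) = (F (cis t) * cnj ?f) * cnj (F (cis t) * cnj ?f)"
      by (simp add: mult_ac)
    also have "F (cis t) * cnj ?f = of_nat n * (g (cis t) + cnj (g (cis t)) - 1)"
      unfolding F_def g_def by (rule z_deriv_Ta_power_mult_cnj_unit_circle[OF assms(1,2)]) simp
    finally show ?thesis by (simp add: power2_eq_square algebra_simps)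
  qed
  have integral: "((\<lambda>t. of_nat n ^ 2 * (g (cis t) ^ 2 + cnj (g (cis t) ^ 2) + 1
        + 2 * (g (cis t) * cnj (g (cis t))) - 2 * g (cis t) - 2 * cnj (g (cis t))))
      has_integral of_nat n ^ 2 * (of_real (2 * pi) + cnj (of_real (2 * pi)) + of_real (2 * pi)
        + 2 * of_real (2 * pi / (1 - s ^ 2)) - 2 * of_real (2 * pi) - 2 * cnj (of_real (2 * pi)))) {0..2*pi}"
    unfolding g_def
    by (intro has_integral_mult_right has_integral_diff has_integral_add
        has_integral_cnj[unfolded o_def, THEN iffD2] has_integral_unit_circle_averages[OF assms(1,2)]
        has_integral_one_unit_circle)
  have integral_value: "of_nat n ^ 2 * (of_real (2 * pi) + cnj (of_real (2 * pi)) + of_real (2 * pi)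
        + 2 * of_real (2 * pi / (1 - s ^ 2)) - 2 * of_real (2 * pi) - 2 * cnj (of_real (2 * pi)))
      = complex_of_real (2 * pi * (real n ^ 2 * (2 / (1 - s ^ 2) - 1)))"
  proof -
    have "s ^ 2 < 1" using assms by (simp add: power_less_one_iff)
    then have real_value: "real n ^ 2 * (2 * pi + 2 * pi + 2 * pi + 2 * (2 * pi / (1 - s ^ 2))
        - 2 * (2 * pi) - 2 * (2 * pi)) = 2 * pi * (real n ^ 2 * (2 / (1 - s ^ 2) - 1))"
      by (simp add: field_simps)
    have "of_nat n ^ 2 * (of_real (2 * pi) + cnj (of_real (2 * pi)) + of_real (2 * pi)
        + 2 * of_real (2 * pi / (1 - s ^ 2)) - 2 * of_real (2 * pi) - 2 * cnj (of_real (2 * pi)))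
      = complex_of_real (real n ^ 2 * (2 * pi + 2 * pi + 2 * pi + 2 * (2 * pi / (1 - s ^ 2))
          - 2 * (2 * pi) - 2 * (2 * pi)))"
      by simp
    also have "\<dots> = complex_of_real (2 * pi * (real n ^ 2 * (2 / (1 - s ^ 2) - 1)))"
      by (simp only: real_value)
    finally show ?thesis .
  qed
  show ?thesis unfolding pointwise using integral[unfolded integral_value] .
qed

lemma sums_norm_acoef_square:
  assumes "0 < s" "s < 1"
  shows "(\<lambda>m. norm (acoef (complex_of_real s) m n) ^ 2) sums 1"
proof -
  have R: "1 < 1 / s" using assms by simp
  have "Ta (complex_of_real s) (cis t) ^ n * cnj (Ta (complex_of_real s) (cis t) ^ n) = 1" for t
    using Ta_power_mult_cnj_unit_circle[OF assms] by simp
  then have "(\<lambda>m. acoef (complex_of_real s) m n * cnj (acoef (complex_of_real s) m n))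
      sums (integral {0..2*pi} (\<lambda>t. 1::complex) / (2 * pi))"
    using parseval_powser[OF R acoef_sums[OF assms(1), where n = n] acoef_sums[OF assms(1), where n = n]]
    by (simp only:)
  then have "(\<lambda>m. of_real 1 * acoef (complex_of_real s) m n * cnj (acoef (complex_of_real s) m n))
      sums of_real 1"
    unfolding integral_unique[OF has_integral_one_unit_circle] by simp
  from sums_weighted_norm_square[OF this] show ?thesis by simp
qed

lemma sums_first_moment_acoef:
  assumes "0 < s" "s < 1"
  shows "(\<lambda>m. real m * norm (acoef (complex_of_real s) m n) ^ 2) sums real n"
proof -
  have R: "1 < 1 / s" using assms by simp
  from parseval_powser[OF R sums_of_nat_mult_acoef[OF assms(1), where n = n] acoef_sums[OF assms(1), where n = n]]
  have "(\<lambda>m. of_real (real m) * acoef (complex_of_real s) m n * cnj (acoef (complex_of_real s) m n))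
      sums of_real (real n)"
    unfolding integral_unique[OF has_integral_z_deriv_Ta_power_mult_cnj[OF assms]] by simp
  then show ?thesis by (rule sums_weighted_norm_square)
qed

lemma sums_second_moment_acoef:
  assumes "0 < s" "s < 1"
  shows "(\<lambda>m. real m ^ 2 * norm (acoef (complex_of_real s) m n) ^ 2)
    sums (real n ^ 2 * (2 / (1 - s ^ 2) - 1))"
proof -
  have R: "1 < 1 / s" using assms by simp
  note parseval = parseval_powser[OF R sums_of_nat_mult_acoef[OF assms(1), where n = n] sums_of_nat_mult_acoef[OF assms(1), where n = n],
      unfolded integral_unique[OF has_integral_norm_z_deriv_Ta_power[OF assms]]]
  have "(of_nat m * acoef (complex_of_real s) m n) * cnj (of_nat m * acoef (complex_of_real s) m n)
      = of_real (real m ^ 2) * acoef (complex_of_real s) m n * cnj (acoef (complex_of_real s) m n)" for m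
    by (simp add: power2_eq_square)
  moreover have "complex_of_real (2 * pi * x) / complex_of_real (2 * pi) = of_real x" for x by simp
  ultimately have "(\<lambda>m. of_real (real m ^ 2) * acoef (complex_of_real s) m n
      * cnj (acoef (complex_of_real s) m n)) sums of_real (real n ^ 2 * (2 / (1 - s ^ 2) - 1))"
    using parseval by (simp only:)
  then show ?thesis by (rule sums_weighted_norm_square)
qed

section \<open>The three-term recurrence for the coefficients\<close>

definition Ta_fps :: "complex \<Rightarrow> complex fps" where
  "Ta_fps a = (fps_const a + fps_X) * inverse (1 + fps_const (cnj a) * fps_X)"

lemma has_fps_expansion_Ta_power: "(\<lambda>z. Ta a z ^ n) has_fps_expansion Ta_fps a ^ n"
proof -
  have "(\<lambda>z. ((a + z) * inverse (1 + cnj a * z)) ^ n) has_fps_expansion Ta_fps a ^ n"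
    unfolding Ta_fps_def
    by (intro has_fps_expansion_power has_fps_expansion_mult has_fps_expansion_inverse
        has_fps_expansion_add has_fps_expansion_const has_fps_expansion_fps_X
        has_fps_expansion_cmult_left has_fps_expansion_1) simp
  then show ?thesis by (simp add: Ta_def divide_inverse)
qed

lemma acoef_eq_fps_nth: "acoef a m n = fps_nth (Ta_fps a ^ n) m"
  using fps_nth_fps_expansion[OF has_fps_expansion_Ta_power] by (simp add: acoef_def)

lemma Ta_fps_power_ode:
  "(fps_const a + fps_X) * (1 + fps_const (cnj a) * fps_X) * fps_deriv (Ta_fps a ^ n)
    = fps_const (of_nat n) * (1 - fps_const a * fps_const (cnj a)) * Ta_fps a ^ n"
proof (cases n)
  case 0
  then show ?thesis by simp
next
  case (Suc k)
  let ?a = "fps_const a" and ?b = "fps_const (cnj a)" and ?G = "Ta_fps a"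
  let ?D = "1 + ?b * fps_X"
  have DG: "?D * ?G = ?a + fps_X"
    unfolding Ta_fps_def using inverse_mult_eq_1'[of ?D] by (simp add: algebra_simps)
  from arg_cong[OF this, of fps_deriv] have DG': "?D * fps_deriv ?G = 1 - ?b * ?G"
    by (simp add: algebra_simps)
  have "(?a + fps_X) * ?D * fps_deriv (?G ^ n)
      = of_nat n * (?a + fps_X) * (?D * fps_deriv ?G) * ?G ^ (n - 1)"
    by (simp add: fps_deriv_power' algebra_simps)
  also have "\<dots> = of_nat n * ((?D * ?G) * (1 - ?b * ?G)) * ?G ^ (n - 1)"
    unfolding DG' DG by (simp add: algebra_simps)
  also have "(?D * ?G) * (1 - ?b * ?G) = ?G * (?D - ?b * (?a + fps_X))"
    unfolding DG[symmetric] by (simp add: algebra_simps)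
  also have "?D - ?b * (?a + fps_X) = 1 - ?a * ?b"
    by (simp add: algebra_simps)
  finally have "(?a + fps_X) * ?D * fps_deriv (?G ^ n) = of_nat n * (1 - ?a * ?b) * (?G * ?G ^ (n - 1))"
    by (simp only: algebra_simps)
  moreover have "?G * ?G ^ (n - 1) = ?G ^ n" unfolding Suc by simp
  ultimately show ?thesis unfolding fps_of_nat[symmetric] by (simp only: algebra_simps)
qed

lemma acoef_recurrence:
  "a * of_nat (m + 2) * acoef a (m + 2) n + (1 + a * cnj a) * of_nat (m + 1) * acoef a (m + 1) n
    + cnj a * of_nat m * acoef a m n = of_nat n * (1 - a * cnj a) * acoef a (m + 1) n"
proof -
  let ?a = "fps_const a" and ?b = "fps_const (cnj a)" and ?Y = "fps_deriv (Ta_fps a ^ n)"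
  have "(?a + fps_X) * (1 + ?b * fps_X) * ?Y
      = ?a * ?Y + fps_X * ?Y + ?a * (?b * (fps_X * ?Y)) + ?b * (fps_X * (fps_X * ?Y))"
    by (simp add: algebra_simps)
  moreover have "fps_const (of_nat n) * (1 - ?a * ?b) * Ta_fps a ^ n
      = fps_const (of_nat n) * Ta_fps a ^ n - fps_const (of_nat n) * (?a * (?b * Ta_fps a ^ n))"
    by (simp only: right_diff_distrib left_diff_distrib mult_1_right mult.assoc)
  ultimately have "?a * ?Y + fps_X * ?Y + ?a * (?b * (fps_X * ?Y)) + ?b * (fps_X * (fps_X * ?Y))
      = fps_const (of_nat n) * Ta_fps a ^ n - fps_const (of_nat n) * (?a * (?b * Ta_fps a ^ n))"
    using Ta_fps_power_ode[of a n] by simp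
  from arg_cong[OF this, of "\<lambda>F. fps_nth F (m + 1)"] show ?thesis
    unfolding acoef_eq_fps_nth by (cases m) (simp_all add: algebra_simps)
qed

section \<open>Energy of a three-term recurrence\<close>

definition energy :: "real \<Rightarrow> 'a::real_inner \<Rightarrow> 'a \<Rightarrow> real" where
  "energy c u v = norm u ^ 2 + norm v ^ 2 - 2 * c * (u \<bullet> v)"

lemma energy_shift:
  assumes "w = (2 * c) *\<^sub>R v - u"
  shows "energy c v w = energy c u v"
  unfolding energy_def assms power2_norm_eq_inner
  by (simp add: inner_diff_left inner_diff_right inner_commute algebra_simps)

lemma abs_two_inner_le: "\<bar>2 * (u \<bullet> v)\<bar> \<le> norm u ^ 2 + norm v ^ 2"
proof -
  have "\<bar>2 * (u \<bullet> v)\<bar> \<le> 2 * (norm u * norm v)" using Cauchy_Schwarz_ineq2[of u v] by simp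
  also have "\<dots> \<le> norm u ^ 2 + norm v ^ 2" using sum_squares_bound[of "norm u" "norm v"] by simp
  finally show ?thesis .
qed

lemma energy_bounds:
  assumes "\<bar>c\<bar> \<le> 1 - \<eta>" "0 \<le> \<eta>"
  shows "\<eta> * (norm u ^ 2 + norm v ^ 2) \<le> energy c u v"
    and "energy c u v \<le> 2 * (norm u ^ 2 + norm v ^ 2)"
proof -
  define P where "P = norm u ^ 2 + norm v ^ 2"
  define X where "X = c * (2 * (u \<bullet> v))"
  have "\<bar>X\<bar> = \<bar>c\<bar> * \<bar>2 * (u \<bullet> v)\<bar>" unfolding X_def by (rule abs_mult)
  also have "\<dots> \<le> (1 - \<eta>) * P"
    unfolding P_def using assms abs_two_inner_le[of u v] by (intro mult_mono) auto
  finally have "X \<le> P - \<eta> * P" "- X \<le> P - \<eta> * P" by (simp_all add: abs_le_iff algebra_simps)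
  moreover have "energy c u v = P - X" "0 \<le> \<eta> * P"
    unfolding energy_def P_def X_def using assms by (simp_all add: algebra_simps)
  ultimately show "\<eta> * (norm u ^ 2 + norm v ^ 2) \<le> energy c u v"
    and "energy c u v \<le> 2 * (norm u ^ 2 + norm v ^ 2)"
    unfolding P_def[symmetric] by linarith+
qed

lemma energy_step:
  assumes w: "w = (2 * c') *\<^sub>R v - u"
    and c: "\<bar>c\<bar> \<le> 1 - \<eta>" and c': "\<bar>c'\<bar> \<le> 1 - \<eta>" and "0 < \<eta>" and d: "\<bar>c - c'\<bar> \<le> d"
  shows "energy c' v w \<le> (1 + d / \<eta>) * energy c u v"
    and "energy c u v \<le> (1 + d / \<eta>) * energy c' v w"
proof -
  define P where "P = norm u ^ 2 + norm v ^ 2"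
  have "\<bar>energy c' v w - energy c u v\<bar> = \<bar>c - c'\<bar> * \<bar>2 * (u \<bullet> v)\<bar>"
    unfolding energy_shift[OF w] unfolding energy_def by (simp add: abs_mult[symmetric] algebra_simps)
  also have "\<dots> \<le> d * P" unfolding P_def using d abs_two_inner_le by (intro mult_mono) auto
  finally have diff: "\<bar>energy c' v w - energy c u v\<bar> \<le> d * P" .
  have "0 \<le> d" using d by simp
  have le_energy: "d * P \<le> d / \<eta> * E" if "\<eta> * P \<le> E" for E
  proof -
    have "d * P = d / \<eta> * (\<eta> * P)" using \<open>0 < \<eta>\<close> by simp
    also have "\<dots> \<le> d / \<eta> * E" using that \<open>0 \<le> d\<close> \<open>0 < \<eta>\<close> by (intro mult_left_mono) auto
    finally show ?thesis .
  qed
  have "d * P \<le> d / \<eta> * energy c u v"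
    using le_energy energy_bounds(1)[OF c less_imp_le[OF \<open>0 < \<eta>\<close>]] unfolding P_def by blast
  moreover have "d * P \<le> d / \<eta> * energy c' v w"
    using le_energy energy_bounds(1)[OF c' less_imp_le[OF \<open>0 < \<eta>\<close>]]
    unfolding P_def energy_shift[OF w] by blast
  moreover from diff have "energy c' v w \<le> energy c u v + d * P" "energy c u v \<le> energy c' v w + d * P"
    by (simp_all add: abs_le_iff)
  ultimately show "energy c' v w \<le> (1 + d / \<eta>) * energy c u v"
    and "energy c u v \<le> (1 + d / \<eta>) * energy c' v w"
    unfolding distrib_right mult_1_left by linarith+
qed

lemma ratio_bound_iterate:
  fixes Q :: "nat \<Rightarrow> real"
  assumes "1 \<le> \<rho>"
    and step: "\<And>k. i \<le> k \<Longrightarrow> k < i + d \<Longrightarrow> Q (Suc k) \<le> \<rho> * Q k \<and> Q k \<le> \<rho> * Q (Suc k)"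
  shows "Q i \<le> \<rho> ^ d * Q (i + d) \<and> Q (i + d) \<le> \<rho> ^ d * Q i"
  using step
proof (induction d)
  case 0
  then show ?case by simp
next
  case (Suc d)
  then have IH: "Q i \<le> \<rho> ^ d * Q (i + d)" "Q (i + d) \<le> \<rho> ^ d * Q i" by auto
  have step_d: "Q (Suc (i + d)) \<le> \<rho> * Q (i + d)" "Q (i + d) \<le> \<rho> * Q (Suc (i + d))"
    using Suc.prems[of "i + d"] by auto
  have "0 \<le> \<rho> ^ d" using \<open>1 \<le> \<rho>\<close> by simp
  then have "Q i \<le> \<rho> ^ d * (\<rho> * Q (Suc (i + d)))"
    using IH(1) mult_left_mono[OF step_d(2) \<open>0 \<le> \<rho> ^ d\<close>] by linarith
  moreover have "Q (Suc (i + d)) \<le> \<rho> * (\<rho> ^ d * Q i)"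
    using step_d(1) mult_left_mono[OF IH(2), of \<rho>] \<open>1 \<le> \<rho>\<close> by linarith
  ultimately show ?case by (simp add: mult_ac)
qed

section \<open>Mass and counting in a window\<close>

lemma exists_ge_average:
  fixes p :: "'a \<Rightarrow> real"
  assumes "finite W" "W \<noteq> {}"
  shows "\<exists>m\<in>W. sum p W / card W \<le> p m"
proof (rule ccontr)
  assume "\<not> (\<exists>m\<in>W. sum p W / card W \<le> p m)"
  then have "sum p W < real (card W) * (sum p W / card W)"
    using assms by (intro sum_bounded_above_strict) (auto simp: not_le)
  then show False using assms by simp
qed

lemma finite_window: "finite {m::nat. a \<le> real m \<and> real m \<le> b}"
  by (rule finite_subset[of _ "{..nat \<lfloor>b\<rfloor>}"]) (auto simp: le_nat_floor le_floor_iff)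

lemma card_window_le:
  assumes "0 \<le> b"
  shows "real (card {m::nat. a \<le> real m \<and> real m \<le> b}) \<le> b + 1"
proof -
  have "card {m::nat. a \<le> real m \<and> real m \<le> b} \<le> card {..nat \<lfloor>b\<rfloor>}"
    by (intro card_mono) (auto simp: le_nat_floor le_floor_iff)
  moreover have "real (nat \<lfloor>b\<rfloor>) \<le> b" using assms by (simp add: of_nat_nat)
  ultimately show ?thesis by simp
qed

text \<open>A Chebyshev-type bound: the weight \<open>(m - \<alpha> n) (\<beta> n - m)\<close> is at most
  \<open>(\<beta> - \<alpha>)\<^sup>2 n\<^sup>2 / 4\<close> and is negative outside the window, while its mean is
  \<open>n\<^sup>2 (\<alpha> + \<beta> - \<alpha> \<beta> - V)\<close> by the moment identities.\<close>
lemma mass_in_window_ge: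
  fixes p :: "nat \<Rightarrow> real" and \<alpha> \<beta> V :: real
  assumes nonneg: "\<And>m. 0 \<le> p m" and "0 < n" "\<alpha> < \<beta>"
    and S0: "p sums 1"
    and S1: "(\<lambda>m. real m * p m) sums real n"
    and S2: "(\<lambda>m. real m ^ 2 * p m) sums (real n ^ 2 * V)"
  shows "4 * (\<alpha> + \<beta> - \<alpha> * \<beta> - V) / (\<beta> - \<alpha>) ^ 2
    \<le> (\<Sum>m | \<alpha> * n \<le> real m \<and> real m \<le> \<beta> * n. p m)"
proof -
  define W where "W = {m. \<alpha> * n \<le> real m \<and> real m \<le> \<beta> * n}"
  define w where "w m = (real m - \<alpha> * n) * (\<beta> * n - real m)" for m
  define K where "K = (\<beta> - \<alpha>) ^ 2 / 4"
  have "(\<lambda>m. - (real m ^ 2 * p m) + ((\<alpha> + \<beta>) * n) * (real m * p m) - (\<alpha> * \<beta> * n ^ 2) * p m)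
      sums (- (real n ^ 2 * V) + ((\<alpha> + \<beta>) * n) * real n - (\<alpha> * \<beta> * n ^ 2) * 1)"
    by (intro sums_diff sums_add sums_minus sums_mult S0 S1 S2)
  then have weight_sums: "(\<lambda>m. w m * p m) sums (real n ^ 2 * (\<alpha> + \<beta> - \<alpha> * \<beta> - V))"
    unfolding w_def by (simp add: algebra_simps power2_eq_square)
  have "w m * p m \<le> (if m \<in> W then w m * p m else 0)" for m
  proof (cases "m \<in> W")
    case False
    have "\<alpha> * n < \<beta> * n" using assms by simp
    with False have "w m \<le> 0"
      unfolding W_def w_def by (auto simp: not_le mult_nonneg_nonpos mult_nonpos_nonneg)
    with False show ?thesis using nonneg[of m] by (simp add: mult_nonpos_nonneg)
  qed simp
  then have "real n ^ 2 * (\<alpha> + \<beta> - \<alpha> * \<beta> - V) \<le> (\<Sum>m\<in>W. w m * p m)"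
    unfolding W_def by (rule sums_le[OF _ weight_sums sums_If_finite_set[OF finite_window]])
  also have "\<dots> \<le> (\<Sum>m\<in>W. (K * real n ^ 2) * p m)"
  proof (intro sum_mono mult_right_mono nonneg)
    fix m
    have "K * real n ^ 2 - w m = (real m - (\<alpha> + \<beta>) * n / 2) ^ 2"
      unfolding K_def w_def by (simp add: power2_eq_square field_simps)
    then show "w m \<le> K * real n ^ 2" by (metis diff_ge_0_iff_ge zero_le_power2)
  qed
  also have "\<dots> = real n ^ 2 * (K * (\<Sum>m\<in>W. p m))" by (simp add: sum_distrib_left mult_ac)
  finally have "\<alpha> + \<beta> - \<alpha> * \<beta> - V \<le> K * (\<Sum>m\<in>W. p m)" using \<open>0 < n\<close> by simp
  moreover have "0 < K" unfolding K_def using \<open>\<alpha> < \<beta>\<close> by simp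
  ultimately show ?thesis unfolding W_def K_def by (simp add: field_simps)
qed

lemma exists_large_weight_in_window:
  fixes p :: "nat \<Rightarrow> real" and \<alpha> \<beta> V :: real
  assumes "\<And>m. 0 \<le> p m" and "0 < n" and "0 \<le> \<alpha>" "\<alpha> < \<beta>"
    and "p sums 1" "(\<lambda>m. real m * p m) sums real n" "(\<lambda>m. real m ^ 2 * p m) sums (real n ^ 2 * V)"
    and G: "0 < \<alpha> + \<beta> - \<alpha> * \<beta> - V"
  shows "\<exists>m. \<alpha> * n \<le> real m \<and> real m \<le> \<beta> * n
    \<and> 4 * (\<alpha> + \<beta> - \<alpha> * \<beta> - V) / ((\<beta> - \<alpha>) ^ 2 * (\<beta> + 1) * n) \<le> p m"
proof -
  define W where "W = {m. \<alpha> * n \<le> real m \<and> real m \<le> \<beta> * n}"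
  define c where "c = 4 * (\<alpha> + \<beta> - \<alpha> * \<beta> - V) / (\<beta> - \<alpha>) ^ 2"
  have "c \<le> sum p W" unfolding c_def W_def by (rule mass_in_window_ge) (use assms in auto)
  moreover have "0 < c" unfolding c_def using G \<open>\<alpha> < \<beta>\<close> by simp
  ultimately have "W \<noteq> {}" by auto
  then obtain m where "m \<in> W" and m: "sum p W / card W \<le> p m"
    using exists_ge_average[OF _ \<open>W \<noteq> {}\<close>] finite_window unfolding W_def by blast
  have "0 < card W" using \<open>W \<noteq> {}\<close> finite_window unfolding W_def by (simp add: card_gt_0_iff)
  have "real (card W) \<le> (\<beta> + 1) * n"
    using card_window_le[of "\<beta> * n" "\<alpha> * n"] assms by (simp add: W_def algebra_simps)
  then have "c / ((\<beta> + 1) * n) \<le> sum p W / card W"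
    using \<open>c \<le> sum p W\<close> \<open>0 < c\<close> \<open>0 < card W\<close> by (intro frac_le) auto
  with m \<open>m \<in> W\<close> show ?thesis unfolding W_def c_def by (auto simp: field_simps)
qed

lemma card_ge_of_pairs:
  assumes "\<And>i. i < M \<Longrightarrow> P (L + 2 * i) \<or> P (L + 2 * i + 1)"
  shows "M \<le> card {j. L \<le> j \<and> j < L + 2 * M \<and> P j}"
proof -
  define f where "f i = (if P (L + 2 * i) then L + 2 * i else L + 2 * i + 1)" for i
  have "inj_on f {..<M}"
  proof (rule inj_on_inverseI)
    show "(f i - L) div 2 = i" for i unfolding f_def by auto
  qed
  moreover have "f ` {..<M} \<subseteq> {j. L \<le> j \<and> j < L + 2 * M \<and> P j}"
    using assms unfolding f_def by auto
  ultimately show ?thesis using card_inj_on_le[of f "{..<M}"] by force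
qed

section \<open>Large coefficients in the window\<close>

text \<open>The parameter \<open>s\<close> is the \<open>a\<close> of the theorem and \<open>mu\<close> its \<open>\<mu>\<close>, since
  \<open>1 / \<tau> = (1 - s) / (1 + s)\<close>. The recurrence coefficient \<open>rec_coeff n k\<close> has modulus \<open>1\<close> at the
  turning points \<open>k = n / \<tau>\<close> and \<open>k = \<tau> n\<close>; the window \<open>[window_lo n, window_hi n]\<close> stays a fixed
  proportion inside them, contains \<open>J\<^sub>n\<close>, and is wide compared with the standard deviation
  \<open>s n \<surd>(2 / (1 - s\<^sup>2))\<close> of the distribution \<open>m \<mapsto> |a\<^sub>m\<^sub>,\<^sub>n|\<^sup>2\<close>.\<close>
locale coefficient_window =
  fixes s :: real
  assumes s_pos: "0 < s" and s_less_1: "s < 1"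
begin

definition mu :: real where "mu = 2 * s / (3 * (1 + s))"
definition window_lo :: real where "window_lo = (3 - 2 * s) / (3 * (1 + s))"
definition window_hi :: real where "window_hi = (5 + 3 * s) / (5 * (1 - s))"
definition margin :: real where "margin = (1 - s) ^ 2 / 18"

definition in_window :: "nat \<Rightarrow> nat \<Rightarrow> bool" where
  "in_window n k \<longleftrightarrow> window_lo * n \<le> real k \<and> real k \<le> window_hi * n"

definition rec_coeff :: "nat \<Rightarrow> nat \<Rightarrow> real" where
  "rec_coeff n k = (real n * (1 - s ^ 2) - (1 + s ^ 2) * real k) / (2 * s * real k)"

definition scaled_coeff :: "nat \<Rightarrow> nat \<Rightarrow> complex" where
  "scaled_coeff n k = of_nat k * acoef (complex_of_real s) k n"

definition energy_at :: "nat \<Rightarrow> nat \<Rightarrow> real" where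
  "energy_at n k = energy (rec_coeff n k) (scaled_coeff n k) (scaled_coeff n (Suc k))"

lemma mu_pos: "0 < mu" and mu_less: "mu < 1 / 3"
  using s_pos s_less_1 by (simp_all add: mu_def field_simps)

lemma window_lo_pos: "0 < window_lo" and window_lo_le: "window_lo \<le> 1 - 2 * mu"
  using s_pos s_less_1 by (simp_all add: window_lo_def mu_def field_simps)

lemma one_less_window_hi: "1 < window_hi"
  using s_pos s_less_1 by (simp add: window_hi_def field_simps)

lemma margin_pos: "0 < margin"
  using s_less_1 by (simp add: margin_def)

lemma in_window_J:
  assumes "(1 - 2 * mu) * n \<le> real k" "real k \<le> (1 - mu) * n"
  shows "in_window n k"
proof -
  have "window_lo * n \<le> (1 - 2 * mu) * n" using window_lo_le by (simp add: mult_right_mono)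
  moreover have "(1 - mu) * n \<le> window_hi * n"
    using mu_pos one_less_window_hi by (intro mult_right_mono) auto
  ultimately show ?thesis using assms unfolding in_window_def by linarith
qed

lemma window_variance_gap:
  "0 < window_lo + window_hi - window_lo * window_hi - (2 / (1 - s ^ 2) - 1)"
proof -
  have "s ^ 2 < 1" using s_pos s_less_1 by (simp add: power_less_one_iff)
  have "1 - s ^ 2 = (1 - s) * (1 + s)" by (simp add: power2_eq_square algebra_simps)
  moreover have "1 - s \<noteq> 0" "1 + s \<noteq> 0" using s_pos s_less_1 by auto
  ultimately have "window_lo + window_hi - window_lo * window_hi - (2 / (1 - s ^ 2) - 1)
      = 2 * s ^ 2 / (3 * (1 - s ^ 2))"
    unfolding window_lo_def window_hi_def \<open>1 - s ^ 2 = _\<close> by (simp add: field_split_simps; algebra)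
  with \<open>s ^ 2 < 1\<close> show ?thesis using s_pos by simp
qed

lemma rec_coeff_bounds:
  assumes "0 < n" "in_window n k"
  shows "-1 + (1 - s) ^ 2 / (5 + 3 * s) \<le> rec_coeff n k"
    and "rec_coeff n k \<le> 1 - (1 + s) ^ 2 / (2 * (3 - 2 * s))"
proof -
  have k: "window_lo * n \<le> real k" "real k \<le> window_hi * n" using assms(2) by (auto simp: in_window_def)
  have "0 < window_lo * n" using window_lo_pos \<open>0 < n\<close> by simp
  with k have "0 < real k" by linarith
  define x where "x = real n / real k"
  have rc: "rec_coeff n k = ((1 - s ^ 2) * x - (1 + s ^ 2)) / (2 * s)"
    unfolding rec_coeff_def x_def using \<open>0 < real k\<close> s_pos by (simp add: field_simps)
  have "x \<le> 1 / window_lo" "1 / window_hi \<le> x"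
    unfolding x_def using k \<open>0 < real k\<close> window_lo_pos one_less_window_hi \<open>0 < n\<close>
    by (simp_all add: field_simps)
  then have x_le: "x \<le> 3 * (1 + s) / (3 - 2 * s)" and x_ge: "5 * (1 - s) / (5 + 3 * s) \<le> x"
    unfolding window_lo_def window_hi_def by simp_all
  have "0 \<le> 1 - s ^ 2" using s_pos s_less_1 by (simp add: power_le_one)
  then have "(1 - s ^ 2) * x \<le> (1 - s ^ 2) * (3 * (1 + s) / (3 - 2 * s))"
    and "(1 - s ^ 2) * (5 * (1 - s) / (5 + 3 * s)) \<le> (1 - s ^ 2) * x"
    using mult_left_mono[OF x_le] mult_left_mono[OF x_ge] by blast+
  then have "rec_coeff n k \<le> ((1 - s ^ 2) * (3 * (1 + s) / (3 - 2 * s)) - (1 + s ^ 2)) / (2 * s)"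
    and "((1 - s ^ 2) * (5 * (1 - s) / (5 + 3 * s)) - (1 + s ^ 2)) / (2 * s) \<le> rec_coeff n k"
    unfolding rc using s_pos by (auto intro!: divide_right_mono diff_right_mono)
  moreover have "3 - 2 * s \<noteq> 0" "5 + 3 * s \<noteq> 0" "2 * s * (5 + 3 * s) \<noteq> 0" "s \<noteq> 0"
    using s_pos s_less_1 by auto
  then have "((1 - s ^ 2) * (3 * (1 + s) / (3 - 2 * s)) - (1 + s ^ 2)) / (2 * s)
      = 1 - (1 + s) ^ 2 / (2 * (3 - 2 * s))"
    and "((1 - s ^ 2) * (5 * (1 - s) / (5 + 3 * s)) - (1 + s ^ 2)) / (2 * s)
      = -1 + (1 - s) ^ 2 / (5 + 3 * s)"
    by (simp_all add: field_simps) (simp_all add: algebra_simps power2_eq_square)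
  ultimately show "-1 + (1 - s) ^ 2 / (5 + 3 * s) \<le> rec_coeff n k"
    and "rec_coeff n k \<le> 1 - (1 + s) ^ 2 / (2 * (3 - 2 * s))"
    by simp_all
qed

lemma abs_rec_coeff_le:
  assumes "0 < n" "in_window n k"
  shows "\<bar>rec_coeff n k\<bar> \<le> 1 - margin"
proof -
  have "margin \<le> (1 + s) ^ 2 / (2 * (3 - 2 * s))"
  proof -
    have "margin \<le> 1 / 18" unfolding margin_def using s_pos s_less_1 by (simp add: power_le_one)
    also have "\<dots> \<le> 1 / (2 * (3 - 2 * s))" using s_pos s_less_1 by (simp add: field_simps)
    also have "\<dots> \<le> (1 + s) ^ 2 / (2 * (3 - 2 * s))"
      using s_pos s_less_1 by (intro divide_right_mono) (auto simp: one_le_power)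
    finally show ?thesis .
  qed
  moreover have "margin \<le> (1 - s) ^ 2 / (5 + 3 * s)"
    unfolding margin_def using s_pos s_less_1 by (intro divide_left_mono) auto
  ultimately show ?thesis using rec_coeff_bounds[OF assms] by (simp add: abs_le_iff)
qed

lemma abs_rec_coeff_diff_le:
  assumes "0 < n" "window_lo * n \<le> real k"
  shows "\<bar>rec_coeff n k - rec_coeff n (Suc k)\<bar> \<le> (1 - s ^ 2) / (2 * s * window_lo ^ 2 * n)"
proof -
  have "0 < window_lo * n" using window_lo_pos \<open>0 < n\<close> by simp
  with assms(2) have "0 < real k" by linarith
  have "0 < 1 - s ^ 2" using s_pos s_less_1 by (simp add: power_less_one_iff)
  have diff: "rec_coeff n k - rec_coeff n (Suc k) = real n * (1 - s ^ 2) / (2 * s * (real k * (real k + 1)))"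
  proof -
    let ?a = "real n * (1 - s ^ 2)" and ?b = "1 + s ^ 2"
    have "rec_coeff n k = ?a / (2 * s * real k) - ?b / (2 * s)"
      and "rec_coeff n (Suc k) = ?a / (2 * s * (real k + 1)) - ?b / (2 * s)"
      unfolding rec_coeff_def using s_pos \<open>0 < real k\<close> by (simp_all add: diff_divide_distrib add.commute)
    moreover have "A / (2 * s * x) - A / (2 * s * (x + 1)) = A / (2 * s * (x * (x + 1)))"
      if "0 < x" for A x :: real
    proof -
      have "2 * s * x \<noteq> 0" "2 * s * (x + 1) \<noteq> 0" "2 * s * (x * (x + 1)) \<noteq> 0"
        using s_pos that by (simp_all add: add_pos_pos)
      then show ?thesis by (simp add: field_simps)
    qed
    ultimately show ?thesis using \<open>0 < real k\<close> by simp
  qed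
  have "real n * (1 - s ^ 2) / (2 * s * (real k * (real k + 1)))
      \<le> real n * (1 - s ^ 2) / (2 * s * (window_lo * n) ^ 2)"
  proof -
    have "(window_lo * n) ^ 2 \<le> real k ^ 2" using assms window_lo_pos by (intro power_mono) auto
    also have "\<dots> \<le> real k * (real k + 1)" by (simp add: power2_eq_square algebra_simps)
    finally show ?thesis
      using s_pos \<open>0 < 1 - s ^ 2\<close> assms window_lo_pos \<open>0 < real k\<close>
      by (intro divide_left_mono mult_left_mono mult_pos_pos) auto
  qed
  also have "\<dots> = (1 - s ^ 2) / (2 * s * window_lo ^ 2 * n)"
    using assms window_lo_pos s_pos by (simp add: field_simps power2_eq_square)
  finally show ?thesis
    unfolding diff using s_pos \<open>0 < 1 - s ^ 2\<close> \<open>0 < real k\<close> by (simp add: abs_of_nonneg)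
qed

lemma scaled_coeff_recurrence:
  "scaled_coeff n (Suc (Suc k))
    = (2 * rec_coeff n (Suc k)) *\<^sub>R scaled_coeff n (Suc k) - scaled_coeff n k"
proof -
  let ?A = "\<lambda>m. acoef (complex_of_real s) m n"
  have rec: "of_real s * of_nat (k + 2) * ?A (k + 2) =
      (of_nat n * (1 - of_real s ^ 2) - (1 + of_real s ^ 2) * of_nat (k + 1)) * ?A (k + 1)
      - of_real s * of_nat k * ?A k"
    using acoef_recurrence[of "complex_of_real s" k n] by (simp add: power2_eq_square) algebra
  have "s * (2 * rec_coeff n (Suc k) * real (Suc k)) = real n * (1 - s ^ 2) - (1 + s ^ 2) * real (k + 1)"
    unfolding rec_coeff_def using s_pos by simp
  from arg_cong[OF this, of complex_of_real]
  have coeff: "of_real s * (of_real (2 * rec_coeff n (Suc k)) * of_nat (k + 1))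
      = of_nat n * (1 - of_real s ^ 2) - (1 + of_real s ^ 2) * (of_nat (k + 1) :: complex)"
    by simp
  have "of_real s * scaled_coeff n (Suc (Suc k))
      = of_real s * (of_real (2 * rec_coeff n (Suc k)) * scaled_coeff n (Suc k) - scaled_coeff n k)"
    using rec coeff unfolding scaled_coeff_def by (simp only: Suc_eq_plus1 add.assoc one_add_one) algebra
  then show ?thesis using s_pos by (simp add: scaleR_conv_of_real)
qed

lemma energy_at_step:
  assumes "0 < n" "in_window n k" "in_window n (Suc k)"
  defines "\<rho> \<equiv> 1 + (1 - s ^ 2) / (2 * s * window_lo ^ 2 * margin * n)"
  shows "energy_at n (Suc k) \<le> \<rho> * energy_at n k \<and> energy_at n k \<le> \<rho> * energy_at n (Suc k)"
proof -
  have "window_lo * n \<le> real k" using assms(2) by (simp add: in_window_def)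
  have "\<rho> = 1 + (1 - s ^ 2) / (2 * s * window_lo ^ 2 * n) / margin" unfolding \<rho>_def by simp
  then show ?thesis
    using energy_step[OF scaled_coeff_recurrence abs_rec_coeff_le[OF assms(1,2)]
        abs_rec_coeff_le[OF assms(1,3)] margin_pos abs_rec_coeff_diff_le[OF assms(1) \<open>window_lo * n \<le> real k\<close>]]
    unfolding energy_at_def by simp
qed

text \<open>The energy varies by a factor \<open>1 + O(1/n)\<close> per step over \<open>O(n)\<close> steps, hence by a
  bounded factor across the whole window.\<close>
definition energy_ratio :: real where
  "energy_ratio = exp ((window_hi - window_lo) * (1 - s ^ 2) / (2 * s * window_lo ^ 2 * margin))"

lemma energy_at_le_ratio:
  assumes "0 < n" "in_window n i" "in_window n j"
  shows "energy_at n i \<le> energy_ratio * energy_at n j"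
proof -
  define \<rho> where "\<rho> = 1 + (1 - s ^ 2) / (2 * s * window_lo ^ 2 * margin * n)"
  have "0 < 1 - s ^ 2" using s_pos s_less_1 by (simp add: power_less_one_iff)
  then have "0 \<le> (1 - s ^ 2) / (2 * s * window_lo ^ 2 * margin * n)"
    using s_pos window_lo_pos margin_pos by simp
  then have "1 \<le> \<rho>" unfolding \<rho>_def by simp
  have step: "energy_at n (Suc k) \<le> \<rho> * energy_at n k \<and> energy_at n k \<le> \<rho> * energy_at n (Suc k)"
    if "min i j \<le> k" "k < max i j" for k
    using that assms unfolding \<rho>_def
    by (intro energy_at_step) (auto simp: in_window_def)
  define d where "d = max i j - min i j"
  have ratio: "energy_at n i \<le> \<rho> ^ d * energy_at n j"
    using ratio_bound_iterate[OF \<open>1 \<le> \<rho>\<close>, of "min i j" d "energy_at n"] step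
    unfolding d_def by (cases "i \<le> j") (auto simp: max_def min_def)
  have "real d \<le> (window_hi - window_lo) * n"
    using assms unfolding d_def in_window_def by (auto simp: max_def min_def of_nat_diff algebra_simps)
  have "\<rho> ^ d \<le> exp ((1 - s ^ 2) / (2 * s * window_lo ^ 2 * margin * n)) ^ d"
    unfolding \<rho>_def using \<open>0 \<le> (1 - s ^ 2) / _\<close> by (intro power_mono) (auto intro: exp_ge_add_one_self)
  also have "\<dots> = exp (real d * ((1 - s ^ 2) / (2 * s * window_lo ^ 2 * margin * n)))"
    by (simp only: exp_of_nat_mult)
  also have "\<dots> \<le> energy_ratio"
  proof -
    have "real d * ((1 - s ^ 2) / (2 * s * window_lo ^ 2 * margin * n))
        \<le> (window_hi - window_lo) * n * ((1 - s ^ 2) / (2 * s * window_lo ^ 2 * margin * n))"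
      using \<open>real d \<le> _\<close> \<open>0 \<le> (1 - s ^ 2) / _\<close> by (rule mult_right_mono)
    also have "\<dots> = (window_hi - window_lo) * (1 - s ^ 2) / (2 * s * window_lo ^ 2 * margin)"
      using \<open>0 < n\<close> by simp
    finally show ?thesis unfolding energy_ratio_def by simp
  qed
  finally have "\<rho> ^ d \<le> energy_ratio" .
  moreover have "0 \<le> energy_at n j"
    using energy_bounds(1)[OF abs_rec_coeff_le[OF assms(1,3)] less_imp_le[OF margin_pos]] margin_pos
    unfolding energy_at_def by (smt (verit) mult_nonneg_nonneg zero_le_power2)
  ultimately show ?thesis using ratio by (smt (verit) mult_right_mono)
qed

definition peak_mass :: real where
  "peak_mass = 4 * (window_lo + window_hi - window_lo * window_hi - (2 / (1 - s ^ 2) - 1))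
     / ((window_hi - window_lo) ^ 2 * (window_hi + 1))"

definition energy_const :: real where
  "energy_const = margin * window_lo ^ 2 * peak_mass / energy_ratio"

lemma peak_mass_pos: "0 < peak_mass"
proof -
  have "window_lo < window_hi" using window_lo_le mu_pos one_less_window_hi by simp
  then show ?thesis unfolding peak_mass_def using window_variance_gap one_less_window_hi by simp
qed

lemma energy_const_pos: "0 < energy_const"
  unfolding energy_const_def energy_ratio_def using margin_pos window_lo_pos peak_mass_pos by simp

lemma norm_scaled_coeff_square:
  "norm (scaled_coeff n k) ^ 2 = real k ^ 2 * norm (acoef (complex_of_real s) k n) ^ 2"
  by (simp add: scaled_coeff_def norm_mult power_mult_distrib)

lemma exists_large_energy_at:
  assumes "0 < n"
  shows "\<exists>m. in_window n m \<and> margin * window_lo ^ 2 * peak_mass * n \<le> energy_at n m"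
proof -
  have "window_lo < window_hi" using window_lo_le mu_pos one_less_window_hi by simp
  obtain m where m: "window_lo * n \<le> real m" "real m \<le> window_hi * n"
    and "4 * (window_lo + window_hi - window_lo * window_hi - (2 / (1 - s ^ 2) - 1))
        / ((window_hi - window_lo) ^ 2 * (window_hi + 1) * n)
      \<le> norm (acoef (complex_of_real s) m n) ^ 2"
    using exists_large_weight_in_window[OF _ assms less_imp_le[OF window_lo_pos] \<open>window_lo < window_hi\<close>
        sums_norm_acoef_square[OF s_pos s_less_1] sums_first_moment_acoef[OF s_pos s_less_1]
        sums_second_moment_acoef[OF s_pos s_less_1] window_variance_gap]
    by auto
  then have large: "peak_mass / n \<le> norm (acoef (complex_of_real s) m n) ^ 2"
    unfolding peak_mass_def by (simp add: mult.assoc)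
  have "margin * window_lo ^ 2 * peak_mass * n = margin * (window_lo * n) ^ 2 * (peak_mass / n)"
    using assms by (simp add: power2_eq_square)
  also have "\<dots> \<le> margin * real m ^ 2 * norm (acoef (complex_of_real s) m n) ^ 2"
    using m large margin_pos window_lo_pos peak_mass_pos by (intro mult_mono mult_left_mono power_mono) auto
  also have "\<dots> \<le> margin * (norm (scaled_coeff n m) ^ 2 + norm (scaled_coeff n (Suc m)) ^ 2)"
    unfolding norm_scaled_coeff_square using margin_pos by (simp add: mult.assoc)
  also have "\<dots> \<le> energy_at n m"
    unfolding energy_at_def
    by (rule energy_bounds(1)[OF abs_rec_coeff_le less_imp_le[OF margin_pos]])
      (use assms m in \<open>auto simp: in_window_def\<close>)
  finally show ?thesis using m unfolding in_window_def by blast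
qed

lemma energy_at_lower_bound:
  assumes "0 < n" "in_window n k"
  shows "energy_const * n \<le> energy_at n k"
proof -
  obtain m where "in_window n m" and "margin * window_lo ^ 2 * peak_mass * n \<le> energy_at n m"
    using exists_large_energy_at[OF assms(1)] by blast
  moreover have "energy_at n m \<le> energy_ratio * energy_at n k"
    by (rule energy_at_le_ratio[OF assms(1) \<open>in_window n m\<close> assms(2)])
  ultimately have "energy_ratio * (energy_const * n) \<le> energy_ratio * energy_at n k"
    unfolding energy_const_def energy_ratio_def by simp
  then show ?thesis unfolding energy_ratio_def by simp
qed

text \<open>Since the energy dominates \<open>|y\<^sub>j|\<^sup>2 + |y\<^sub>j\<^sub>+\<^sub>1|\<^sup>2\<close> with \<open>y\<^sub>j = j a\<^sub>j\<^sub>,\<^sub>n\<close> and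
  \<open>j \<le> n\<close>, no two consecutive coefficients in the window can both be small.\<close>
lemma large_coefficient_in_pair:
  assumes "0 < n" "(1 - 2 * mu) * n \<le> real j" "real (Suc j) \<le> (1 - mu) * n"
  shows "energy_const / 4 / n \<le> norm (acoef (complex_of_real s) j n) ^ 2
    \<or> energy_const / 4 / n \<le> norm (acoef (complex_of_real s) (Suc j) n) ^ 2"
proof -
  have J: "(1 - 2 * mu) * n \<le> real i \<and> real i \<le> (1 - mu) * n" if "i = j \<or> i = Suc j" for i
    using that assms mu_pos by (auto simp: algebra_simps)
  have "0 < (1 - 2 * mu) * n" "(1 - mu) * n \<le> real n"
    using mu_pos mu_less assms(1) by (simp_all add: algebra_simps)
  then have pos_le_n: "0 < real i \<and> real i \<le> real n" if "i = j \<or> i = Suc j" for i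
    using J[OF that] by linarith
  have "energy_const * n \<le> energy_at n j"
    using energy_at_lower_bound assms(1) in_window_J J by blast
  also have "\<dots> \<le> 2 * (norm (scaled_coeff n j) ^ 2 + norm (scaled_coeff n (Suc j)) ^ 2)"
    unfolding energy_at_def using abs_rec_coeff_le[OF assms(1) in_window_J] J margin_pos
    by (intro energy_bounds(2)) auto
  finally have "energy_const * n / 4 \<le> norm (scaled_coeff n j) ^ 2
      \<or> energy_const * n / 4 \<le> norm (scaled_coeff n (Suc j)) ^ 2"
    by argo
  moreover have "energy_const / 4 / n \<le> norm (acoef (complex_of_real s) i n) ^ 2"
    if "i = j \<or> i = Suc j" "energy_const * n / 4 \<le> norm (scaled_coeff n i) ^ 2" for i
  proof -
    have "energy_const / 4 / n = (energy_const * n / 4) / real n ^ 2"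
      using assms(1) by (simp add: power2_eq_square)
    also have "\<dots> \<le> norm (scaled_coeff n i) ^ 2 / real i ^ 2"
      using that pos_le_n[OF that(1)] energy_const_pos
      by (intro frac_le power_mono) auto
    also have "\<dots> = norm (acoef (complex_of_real s) i n) ^ 2"
      unfolding norm_scaled_coeff_square using pos_le_n[OF that(1)] by simp
    finally show ?thesis .
  qed
  ultimately show ?thesis by blast
qed

text \<open>Pairs \<open>(L + 2 i, L + 2 i + 1)\<close>, \<open>i < M\<close>, tile an initial part of \<open>J\<^sub>n\<close>, and each contains
  a large coefficient.\<close>
lemma many_large_coefficients:
  assumes n_large: "4 / mu \<le> real n"
  shows "\<exists>E. finite E \<and> (\<forall>m\<in>E. (1 - 2 * mu) * n \<le> real m \<and> real m \<le> (1 - mu) * n)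
    \<and> mu / 4 * n \<le> real (card E)
    \<and> (\<forall>m\<in>E. energy_const / 4 / n \<le> norm (acoef (complex_of_real s) m n) ^ 2)"
proof -
  have "0 < 4 / mu" using mu_pos by simp
  with n_large have "0 < real n" by linarith
  then have "0 < n" by simp
  define L where "L = nat \<lceil>(1 - 2 * mu) * n\<rceil>"
  define M where "M = nat \<lfloor>mu * n / 2\<rfloor>"
  define E where "E = {j. L \<le> j \<and> j < L + 2 * M
    \<and> energy_const / 4 / n \<le> norm (acoef (complex_of_real s) j n) ^ 2}"
  have L: "(1 - 2 * mu) * n \<le> real L" "real L \<le> (1 - 2 * mu) * n + 1"
    unfolding L_def using mu_less by (auto simp: of_nat_nat)
  have "real M = of_int \<lfloor>mu * n / 2\<rfloor>" unfolding M_def using mu_pos by (simp add: of_nat_nat)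
  then have M: "2 * real M \<le> mu * n" "mu * n / 4 \<le> real M"
    using of_int_floor_le[of "mu * n / 2"] real_of_int_floor_gt_diff_one[of "mu * n / 2"] n_large mu_pos
    by (auto simp: field_simps)
  have window: "(1 - 2 * mu) * n \<le> real j \<and> real j \<le> (1 - mu) * n" if "L \<le> j" "j < L + 2 * M" for j
    using that L M by (auto simp: algebra_simps)
  have "M \<le> card E"
    unfolding E_def
  proof (rule card_ge_of_pairs)
    fix i assume "i < M"
    then have "(1 - 2 * mu) * n \<le> real (L + 2 * i)" "real (Suc (L + 2 * i)) \<le> (1 - mu) * n"
      using window[of "L + 2 * i"] window[of "Suc (L + 2 * i)"] by auto
    from large_coefficient_in_pair[OF \<open>0 < n\<close> this]
    show "energy_const / 4 / n \<le> norm (acoef (complex_of_real s) (L + 2 * i) n) ^ 2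
      \<or> energy_const / 4 / n \<le> norm (acoef (complex_of_real s) (L + 2 * i + 1) n) ^ 2"
      by simp
  qed
  with M(2) have "mu / 4 * n \<le> real (card E)" by simp
  moreover have "finite E" unfolding E_def by simp
  ultimately show ?thesis using window unfolding E_def by blast
qed

definition density :: real where
  "density = min (mu / 4) (sqrt (energy_const / 4))"

lemma density_pos: "0 < density"
  unfolding density_def using mu_pos energy_const_pos by simp

lemma large_coefficient_set:
  assumes "4 / mu \<le> real n"
  shows "\<exists>E. finite E \<and> (\<forall>m\<in>E. (1 - 2 * mu) * n \<le> real m \<and> real m \<le> (1 - mu) * n)
    \<and> density * n \<le> real (card E) \<and> (\<forall>m\<in>E. density / sqrt n \<le> norm (acoef (complex_of_real s) m n))"
proof -
  obtain E where E: "finite E" "\<forall>m\<in>E. (1 - 2 * mu) * n \<le> real m \<and> real m \<le> (1 - mu) * n"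
    and card: "mu / 4 * n \<le> real (card E)"
    and large: "\<forall>m\<in>E. energy_const / 4 / n \<le> norm (acoef (complex_of_real s) m n) ^ 2"
    using many_large_coefficients[OF assms] by blast
  have "density * n \<le> mu / 4 * n" unfolding density_def by (intro mult_right_mono) auto
  moreover have "density / sqrt n \<le> norm (acoef (complex_of_real s) m n)" if "m \<in> E" for m
  proof -
    have "density / sqrt n \<le> sqrt (energy_const / 4) / sqrt n"
      unfolding density_def by (intro divide_right_mono) auto
    also have "\<dots> = sqrt (energy_const / 4 / n)" by (rule real_sqrt_divide[symmetric])
    also have "\<dots> \<le> sqrt (norm (acoef (complex_of_real s) m n) ^ 2)"
      using large that by (intro real_sqrt_le_mono) auto
    finally show ?thesis by simp
  qed
  ultimately show ?thesis using E card by (meson order_trans)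
qed

end

theorem mainTheorem13:
  fixes a :: real and \<tau> \<mu> :: real
  assumes "0 < a" "a < 1"
    and "\<tau> = (1 + a) / (1 - a)"
    and "inverse \<tau> = 1 - 3 * \<mu>"
  shows "\<exists>\<delta>>0. \<forall>\<^sub>F n in sequentially.
           \<exists>E :: nat set. finite E
             \<and> (\<forall>m\<in>E. (1 - 2 * \<mu>) * real n \<le> real m \<and> real m \<le> (1 - \<mu>) * real n)
             \<and> real (card E) \<ge> \<delta> * real n
             \<and> (\<forall>m\<in>E. norm (acoef (complex_of_real a) m n) \<ge> \<delta> / sqrt (real n))"
proof -
  interpret coefficient_window a using assms by unfold_locales
  have "1 - 3 * \<mu> = (1 - a) / (1 + a)" using assms(3,4) by simp
  then have "\<mu> = mu" unfolding mu_def using assms(1,2) by (simp add: field_simps)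
  have "\<forall>\<^sub>F n in sequentially. 4 / mu \<le> real n"
    using eventually_ge_at_top[of "nat \<lceil>4 / mu\<rceil>"] by eventually_elim simp
  then show ?thesis
    unfolding \<open>\<mu> = mu\<close> using density_pos large_coefficient_set by (auto elim!: eventually_mono)
qed

end
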